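(* Let $n\ge3$. There exists no spherical $(2,2)$-design $C\subset\mathbb{S}^{n-1}$ with $|C|=\binom{n+1}{2}+1$.
   Context: For $n\ge 2$, let $P_i^{(n)}(t)$ be the normalized Gegenbauer polynomials: $P_0^{(n)}=1$, $P_1^{(n)}=t$, and $(i+n-2)P_{i+1}^{(n)}(t)=(2i+n-2)tP_i^{(n)}(t)-iP_{i-1}^{(n)}(t)$ for $i\ge1$. A spherical $(2,2)$-design is a finite nonempty $C\subset\mathbb{S}^{n-1}$ with $\sum_{x,y\in C}P_{2}^{(n)}(\langle x,y\rangle)=\sum_{x,y\in C}P_{4}^{(n)}(\langle x,y\rangle)=0$. *)

theory Defs
  imports "HOL-Analysis.Analysis"
begin

text \<open>Normalized Gegenbauer polynomials P_i^(n)(t):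
  P_0 = 1, P_1 = t, and (i+n-2) P_{i+1} = (2i+n-2) t P_i - i P_{i-1} for i >= 1.
  Writing i+1 for i, the recurrence reads
  P_{i+2} = ((2i+n) t P_{i+1} - (i+1) P_i) / (i+n-1).\<close>
fun gegenbauer :: "nat \<Rightarrow> nat \<Rightarrow> real \<Rightarrow> real" where
  "gegenbauer n 0 t = 1"
| "gegenbauer n (Suc 0) t = t"
| "gegenbauer n (Suc (Suc i)) t =
     (real (2 * i + n) * t * gegenbauer n (Suc i) t - real (i + 1) * gegenbauer n i t)
       / (real (i + n) - 1)"

definition spherical_22_design :: "(real ^ 'n) set \<Rightarrow> bool" where
  "spherical_22_design C \<longleftrightarrow>
     finite C \<and> C \<noteq> {} \<and> C \<subseteq> sphere 0 1 \<and>
     (\<Sum>x\<in>C. \<Sum>y\<in>C. gegenbauer CARD('n) 2 (x \<bullet> y)) = 0 \<and>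
     (\<Sum>x\<in>C. \<Sum>y\<in>C. gegenbauer CARD('n) 4 (x \<bullet> y)) = 0"

end

(*
  Write n for the dimension and N = n(n + 1)/2 + 1 for the size of C. The two Gegenbauer
  conditions fix the sums of (x \<bullet> y)^2 and (x \<bullet> y)^4 over C \<times> C, and these are exactly the
  equality cases of Cauchy-Schwarz against the isotropic tensors: the second and fourth moment
  tensors of C are isotropic. For the matrix M = ((x \<bullet> y)^2) this means M J = (N/n) J and
  M^2 = N/(n(n+2)) (J + 2M). For this particular N the matrix R = I + (n J - n(n+2) M)/(2N) is
  then a symmetric idempotent with constant diagonal 1/N, so R = \<epsilon> \<epsilon>^T/N for a sign vector \<epsilon>
  with sum 0. The half P = {\<epsilon> = 1} is an equiangular tight frame of N/2 unit vectors with
  squared angle (n-2)/(n(n+2)). Reading the frame identity at two points x, y of P shows that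
  1/(x \<bullet> y) is a rational root of a monic integer quadratic, hence an integer k with
  k^2 (n-2) = n(n+2); but this equation has no solution for n \<ge> 3.
*)

theory Submission
  imports Defs
begin

lemma gegenbauer_2: "gegenbauer n 2 t = (real n * t\<^sup>2 - 1) / (real n - 1)"
  by (simp add: numeral_2_eq_2 power2_eq_square)

lemma gegenbauer_3:
  assumes "n \<ge> 2"
  shows "gegenbauer n 3 t = t * ((real n + 2) * t\<^sup>2 - 3) / (real n - 1)"
  using assms by (simp add: numeral_3_eq_3 numeral_2_eq_2 power2_eq_square field_simps)

lemma gegenbauer_4:
  assumes "n \<ge> 2"
  shows "gegenbauer n 4 t =
    ((real n + 2) * (real n + 4) * t ^ 4 - 6 * (real n + 2) * t\<^sup>2 + 3) / ((real n - 1) * (real n + 1))"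
proof -
  have "gegenbauer n 4 t = (real (2 * 2 + n) * t * gegenbauer n 3 t - real (2 + 1) * gegenbauer n 2 t)
      / (real (2 + n) - 1)"
    by (simp add: numeral_3_eq_3 numeral_2_eq_2 eval_nat_numeral(2))
  also have "\<dots> = ((real n + 4) * t * (t * ((real n + 2) * t\<^sup>2 - 3)) - 3 * (real n * t\<^sup>2 - 1))
      / ((real n - 1) * (real n + 1))"
    using assms by (simp add: gegenbauer_3 gegenbauer_2 add.commute diff_divide_distrib)
  finally show ?thesis
    by (simp add: algebra_simps power2_eq_square power4_eq_xxxx)
qed

lemma design_sum_inner_power2:
  fixes C :: "(real^'n) set"
  assumes "spherical_22_design C" and "CARD('n) \<ge> 2"
  shows "(\<Sum>x\<in>C. \<Sum>y\<in>C. (x \<bullet> y)\<^sup>2) = real (card C) ^ 2 / real CARD('n)"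
proof -
  define n where "n = real CARD('n)"
  have "0 = (\<Sum>x\<in>C. \<Sum>y\<in>C. gegenbauer CARD('n) 2 (x \<bullet> y))"
    using assms(1) by (simp add: spherical_22_design_def)
  also have "\<dots> = (n * (\<Sum>x\<in>C. \<Sum>y\<in>C. (x \<bullet> y)\<^sup>2) - real (card C) ^ 2) / (n - 1)"
    by (simp add: gegenbauer_2 n_def sum_divide_distrib[symmetric] sum_subtractf
        sum_distrib_left[symmetric] power2_eq_square)
  finally show ?thesis
    using assms(2) by (simp add: n_def field_simps)
qed

lemma design_sum_inner_power4:
  fixes C :: "(real^'n) set"
  assumes "spherical_22_design C" and "CARD('n) \<ge> 2"
  shows "(\<Sum>x\<in>C. \<Sum>y\<in>C. (x \<bullet> y) ^ 4) = 3 * real (card C) ^ 2 / (real CARD('n) * (real CARD('n) + 2))"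
proof -
  define n where "n = real CARD('n)"
  define N where "N = real (card C)"
  define S4 where "S4 = (\<Sum>x\<in>C. \<Sum>y\<in>C. (x \<bullet> y) ^ 4)"
  have n: "n \<ge> 2" using assms(2) by (simp add: n_def)
  have "0 = (\<Sum>x\<in>C. \<Sum>y\<in>C. gegenbauer CARD('n) 4 (x \<bullet> y))"
    using assms(1) by (simp add: spherical_22_design_def)
  also have "\<dots> = ((n + 2) * (n + 4) * S4 - 6 * (n + 2) * (\<Sum>x\<in>C. \<Sum>y\<in>C. (x \<bullet> y)\<^sup>2) + 3 * N\<^sup>2)
      / ((n - 1) * (n + 1))"
    by (simp add: gegenbauer_4 assms(2) n_def N_def S4_def sum_divide_distrib[symmetric] sum_subtractf
        sum.distrib sum_distrib_left[symmetric] power2_eq_square)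
  also have "(\<Sum>x\<in>C. \<Sum>y\<in>C. (x \<bullet> y)\<^sup>2) = N\<^sup>2 / n"
    using design_sum_inner_power2[OF assms] by (simp add: n_def N_def)
  finally have "(n + 2) * (n + 4) * S4 - 6 * (n + 2) * (N\<^sup>2 / n) + 3 * N\<^sup>2 = 0"
    using n by simp
  then have "n * (n + 2) * (n + 4) * S4 = 3 * N\<^sup>2 * (n + 4)"
    using n by (simp add: field_simps)
  moreover have "n * (n + 2) * (n + 4) \<noteq> 0"
    using n by simp
  ultimately have "S4 = 3 * N\<^sup>2 * (n + 4) / (n * (n + 2) * (n + 4))"
    by (simp add: eq_divide_eq mult_ac)
  then show ?thesis
    using n by (simp add: S4_def N_def n_def)
qed

(* Tensors are vectors indexed by tuples, so that their Frobenius inner product is \<bullet>. *)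
definition outer_vec :: "real^'a \<Rightarrow> real^'b \<Rightarrow> real^('a \<times> 'b)" where
  "outer_vec a b = vec_lambda (\<lambda>(i, j). a $ i * b $ j)"

definition delta2 :: "real^('n::finite \<times> 'n)" where
  "delta2 = vec_lambda (\<lambda>(i, j). of_bool (i = j))"

definition delta4 :: "real^(('n::finite \<times> 'n) \<times> ('n \<times> 'n))" where
  "delta4 = vec_lambda (\<lambda>((i, j), (k, l)).
     of_bool (i = j \<and> k = l) + of_bool (i = k \<and> j = l) + of_bool (i = l \<and> j = k))"

lemma outer_vec_nth [simp]: "outer_vec a b $ (i, j) = a $ i * b $ j"
  by (simp add: outer_vec_def)

lemma delta2_nth [simp]: "delta2 $ (i, j) = of_bool (i = j)"
  by (simp add: delta2_def)

lemma delta4_nth [simp]: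
  "delta4 $ ((i, j), (k, l)) = of_bool (i = j \<and> k = l) + of_bool (i = k \<and> j = l) + of_bool (i = l \<and> j = k)"
  by (simp add: delta4_def)

lemma sum_UNIV_prod: "(\<Sum>p\<in>UNIV. f p) = (\<Sum>i\<in>UNIV. \<Sum>j\<in>UNIV. f (i, j))"
  by (simp add: sum.cartesian_product UNIV_Times_UNIV[symmetric] del: UNIV_Times_UNIV)

lemma inner_outer_vec: "outer_vec a b \<bullet> outer_vec c d = (a \<bullet> c) * (b \<bullet> d)"
  by (simp add: inner_vec_def sum_UNIV_prod sum_product mult_ac)

lemma inner_delta2_outer_vec: "delta2 \<bullet> outer_vec a b = a \<bullet> b"
  by (simp add: inner_vec_def sum_UNIV_prod)

lemma inner_delta2_self: "delta2 \<bullet> (delta2 :: real^('n::finite \<times> 'n)) = real CARD('n)"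
  by (simp add: inner_vec_def sum_UNIV_prod)

lemma sum_delta4_mult:
  "(\<Sum>i\<in>UNIV. \<Sum>j\<in>UNIV. \<Sum>k\<in>UNIV. \<Sum>l\<in>UNIV.
      (of_bool (i = j \<and> k = l) + of_bool (i = k \<and> j = l) + of_bool (i = l \<and> j = k)) * (F i j k l :: real))
   = (\<Sum>i\<in>(UNIV::'n::finite set). \<Sum>j\<in>UNIV. F i i j j + F i j i j + F i j j i)"
proof -
  have mult: "of_bool (P \<and> Q) * x = (if P then if Q then x else 0 else (0::real))" for P Q x
    by simp
  have const: "(\<Sum>l\<in>A. if P then f l else 0) = (if P then sum f A else (0::real))" for A P f
    by simp
  show ?thesis
    by (simp add: distrib_right sum.distrib mult const sum.delta sum.delta' cong: if_cong del: of_bool_conj)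
qed

lemma inner_delta4_outer_vec:
  "delta4 \<bullet> outer_vec (outer_vec a b) (outer_vec c d)
   = (a \<bullet> b) * (c \<bullet> d) + (a \<bullet> c) * (b \<bullet> d) + (a \<bullet> d) * (b \<bullet> c)"
proof -
  have "delta4 \<bullet> outer_vec (outer_vec a b) (outer_vec c d)
    = (\<Sum>i\<in>UNIV. \<Sum>j\<in>UNIV. \<Sum>k\<in>UNIV. \<Sum>l\<in>UNIV.
      (of_bool (i = j \<and> k = l) + of_bool (i = k \<and> j = l) + of_bool (i = l \<and> j = k)) *
      (a$i * b$j * (c$k * d$l)))"
    by (simp add: inner_vec_def sum_UNIV_prod)
  also have "\<dots> = (\<Sum>i\<in>UNIV. \<Sum>j\<in>UNIV.
      a$i * b$i * (c$j * d$j) + a$i * b$j * (c$i * d$j) + a$i * b$j * (c$j * d$i))"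
    by (rule sum_delta4_mult)
  also have "\<dots> = (a \<bullet> b) * (c \<bullet> d) + (a \<bullet> c) * (b \<bullet> d) + (a \<bullet> d) * (b \<bullet> c)"
    by (simp add: inner_vec_def sum.distrib sum_product mult_ac)
  finally show ?thesis .
qed

lemma inner_delta4_self:
  "delta4 \<bullet> (delta4 :: real^(('n::finite \<times> 'n) \<times> ('n \<times> 'n))) = 3 * real CARD('n) * (real CARD('n) + 2)"
proof -
  have "delta4 \<bullet> (delta4 :: real^(('n \<times> 'n) \<times> ('n \<times> 'n)))
    = (\<Sum>i\<in>(UNIV::'n set). \<Sum>j\<in>UNIV. \<Sum>k\<in>UNIV. \<Sum>l\<in>UNIV.
      (of_bool (i = j \<and> k = l) + of_bool (i = k \<and> j = l) + of_bool (i = l \<and> j = k)) *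
      (of_bool (i = j \<and> k = l) + of_bool (i = k \<and> j = l) + of_bool (i = l \<and> j = k)))"
    by (simp add: inner_vec_def sum_UNIV_prod)
  also have "\<dots> = (\<Sum>i\<in>(UNIV::'n set). \<Sum>j\<in>UNIV. 3 + 6 * of_bool (i = j))"
    by (subst sum_delta4_mult) (auto intro!: sum.cong)
  also have "\<dots> = 3 * real CARD('n) * (real CARD('n) + 2)"
    by (simp add: sum.distrib algebra_simps)
  finally show ?thesis .
qed

lemma eq_scaleR_if_Cauchy_Schwarz_eq:
  fixes A E :: "'a::real_inner"
  assumes "E \<noteq> 0" and "(A \<bullet> E)\<^sup>2 = (A \<bullet> A) * (E \<bullet> E)"
  shows "A = (A \<bullet> E / (E \<bullet> E)) *\<^sub>R E"
proof -
  define c where "c = A \<bullet> E / (E \<bullet> E)"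
  have "E \<bullet> E \<noteq> 0" using assms(1) by simp
  then have "(A - c *\<^sub>R E) \<bullet> (A - c *\<^sub>R E) = 0"
    using assms(2) by (simp add: c_def inner_diff inner_commute field_simps power2_eq_square)
  then show ?thesis
    by (simp add: c_def)
qed

lemma second_moment_isotropic:
  fixes C :: "(real^'n) set" and w :: "real^'n \<Rightarrow> real"
  assumes "(\<Sum>x\<in>C. \<Sum>y\<in>C. w x * w y * (x \<bullet> y)\<^sup>2) = (\<Sum>x\<in>C. w x * (x \<bullet> x))\<^sup>2 / real CARD('n)"
  shows "(\<Sum>x\<in>C. w x * ((x \<bullet> u) * (x \<bullet> v))) = (\<Sum>x\<in>C. w x * (x \<bullet> x)) / real CARD('n) * (u \<bullet> v)"
proof -
  define A where "A = (\<Sum>x\<in>C. w x *\<^sub>R outer_vec x x)"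
  define E :: "real^('n \<times> 'n)" where "E = delta2"
  have AA: "A \<bullet> A = (\<Sum>x\<in>C. \<Sum>y\<in>C. w x * w y * (x \<bullet> y)\<^sup>2)"
    unfolding A_def inner_sum_left inner_sum_right
    by (subst sum.swap) (simp add: inner_outer_vec power2_eq_square mult_ac)
  have AE: "A \<bullet> E = (\<Sum>x\<in>C. w x * (x \<bullet> x))"
    by (simp add: A_def E_def inner_sum_right inner_commute[of _ delta2] inner_delta2_outer_vec)
  have EE: "E \<bullet> E = real CARD('n)"
    by (simp add: E_def inner_delta2_self)
  have "E \<noteq> 0"
    using EE by auto
  moreover have "(A \<bullet> E)\<^sup>2 = (A \<bullet> A) * (E \<bullet> E)"
    using assms by (simp add: AA AE EE)
  ultimately have A: "A = (A \<bullet> E / (E \<bullet> E)) *\<^sub>R E"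
    by (rule eq_scaleR_if_Cauchy_Schwarz_eq)
  have "(\<Sum>x\<in>C. w x * ((x \<bullet> u) * (x \<bullet> v))) = A \<bullet> outer_vec u v"
    by (simp add: A_def inner_sum_left inner_outer_vec)
  also have "\<dots> = (A \<bullet> E / (E \<bullet> E)) * (u \<bullet> v)"
    using arg_cong[OF A, of "\<lambda>X. X \<bullet> outer_vec u v"] by (simp add: E_def inner_delta2_outer_vec)
  finally show ?thesis
    by (simp add: AE EE)
qed

lemma fourth_moment_isotropic:
  fixes C :: "(real^'n) set"
  defines "s \<equiv> \<Sum>x\<in>C. (x \<bullet> x)\<^sup>2"
  assumes "(\<Sum>x\<in>C. \<Sum>y\<in>C. (x \<bullet> y) ^ 4) = 3 * s\<^sup>2 / (real CARD('n) * (real CARD('n) + 2))"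
  shows "(\<Sum>x\<in>C. (x \<bullet> u)\<^sup>2 * (x \<bullet> v)\<^sup>2)
    = s / (real CARD('n) * (real CARD('n) + 2)) * ((u \<bullet> u) * (v \<bullet> v) + 2 * (u \<bullet> v)\<^sup>2)"
proof -
  define n where "n = real CARD('n)"
  define A where "A = (\<Sum>x\<in>C. outer_vec (outer_vec x x) (outer_vec x x))"
  define E :: "real^(('n \<times> 'n) \<times> ('n \<times> 'n))" where "E = delta4"
  have AA: "A \<bullet> A = (\<Sum>x\<in>C. \<Sum>y\<in>C. (x \<bullet> y) ^ 4)"
    unfolding A_def inner_sum_left inner_sum_right
    by (subst sum.swap) (simp add: inner_outer_vec power4_eq_xxxx mult_ac)
  have AE: "A \<bullet> E = 3 * s"
    by (simp add: A_def E_def s_def inner_sum_right inner_commute[of _ delta4] inner_delta4_outer_vec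
        power2_eq_square sum_distrib_left)
  have EE: "E \<bullet> E = 3 * n * (n + 2)"
    by (simp add: E_def n_def inner_delta4_self)
  have n: "n > 0"
    by (simp add: n_def)
  then have "E \<noteq> 0"
    using EE by auto
  moreover have "(A \<bullet> A) * (E \<bullet> E) = 3 * s\<^sup>2 / (n * (n + 2)) * (3 * n * (n + 2))"
    by (simp only: AA EE assms(2) n_def)
  then have "(A \<bullet> E)\<^sup>2 = (A \<bullet> A) * (E \<bullet> E)"
    using n by (simp add: AE power2_eq_square)
  ultimately have A: "A = (A \<bullet> E / (E \<bullet> E)) *\<^sub>R E"
    by (rule eq_scaleR_if_Cauchy_Schwarz_eq)
  have "(\<Sum>x\<in>C. (x \<bullet> u)\<^sup>2 * (x \<bullet> v)\<^sup>2) = A \<bullet> outer_vec (outer_vec u u) (outer_vec v v)"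
    by (simp add: A_def inner_sum_left inner_outer_vec power2_eq_square)
  also have "\<dots> = (A \<bullet> E / (E \<bullet> E)) * ((u \<bullet> u) * (v \<bullet> v) + 2 * (u \<bullet> v)\<^sup>2)"
    using arg_cong[OF A, of "\<lambda>X. X \<bullet> outer_vec (outer_vec u u) (outer_vec v v)"]
    by (simp add: E_def inner_delta4_outer_vec power2_eq_square inner_commute)
  finally show ?thesis
    using n by (simp add: AE EE n_def)
qed

lemma design_inner_self:
  assumes "spherical_22_design C" and "x \<in> C"
  shows "x \<bullet> x = 1"
  using assms by (auto simp: spherical_22_design_def subset_iff norm_eq_1[symmetric])

lemma design_second_moment:
  fixes C :: "(real^'n) set"
  assumes "spherical_22_design C" and "CARD('n) \<ge> 2"
  shows "(\<Sum>x\<in>C. (x \<bullet> u) * (x \<bullet> v)) = real (card C) / real CARD('n) * (u \<bullet> v)"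
  using second_moment_isotropic[of "\<lambda>_. 1" C u v] design_sum_inner_power2[OF assms]
    design_inner_self[OF assms(1)]
  by simp

lemma design_fourth_moment:
  fixes C :: "(real^'n) set"
  assumes "spherical_22_design C" and "CARD('n) \<ge> 2"
  shows "(\<Sum>x\<in>C. (x \<bullet> u)\<^sup>2 * (x \<bullet> v)\<^sup>2)
    = real (card C) / (real CARD('n) * (real CARD('n) + 2)) * ((u \<bullet> u) * (v \<bullet> v) + 2 * (u \<bullet> v)\<^sup>2)"
  using fourth_moment_isotropic[of C u v] design_sum_inner_power4[OF assms]
    design_inner_self[OF assms(1)]
  by simp

lemma sum_eq_card_mult_bound_imp_eq:
  fixes f :: "'a \<Rightarrow> real"
  assumes "finite A" and "\<And>a. a \<in> A \<Longrightarrow> f a \<le> c" and "sum f A = real (card A) * c" and "a \<in> A"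
  shows "f a = c"
proof -
  have "(\<Sum>a\<in>A. c - f a) = 0"
    using assms(3) by (simp add: sum_subtractf)
  then have "\<forall>a\<in>A. c - f a = 0"
    using assms(1,2) by (subst (asm) sum_nonneg_eq_0_iff) auto
  then show ?thesis
    using assms(4) by simp
qed

lemma symmetric_idempotent_entry_square:
  fixes R :: "'a \<Rightarrow> 'a \<Rightarrow> real"
  assumes fin: "finite C"
    and sym: "\<And>x y. x \<in> C \<Longrightarrow> y \<in> C \<Longrightarrow> R x y = R y x"
    and idem: "\<And>x y. x \<in> C \<Longrightarrow> y \<in> C \<Longrightarrow> (\<Sum>z\<in>C. R x z * R z y) = R x y"
    and diag: "\<And>x. x \<in> C \<Longrightarrow> R x x = 1 / card C"
    and xy: "x \<in> C" "y \<in> C"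
  shows "(R x y)\<^sup>2 = 1 / (real (card C))\<^sup>2"
proof -
  define N where "N = real (card C)"
  have N: "N > 0"
    using fin xy by (auto simp: N_def card_gt_0_iff)
  have row_sq: "(\<Sum>z\<in>C. (R u z)\<^sup>2) = 1 / N" if "u \<in> C" for u
    using idem[OF that that] diag[OF that] sym[OF that]
    by (simp add: N_def power2_eq_square cong: sum.cong)
  \<comment> \<open>Cauchy-Schwarz bounds each squared entry by \<open>1 / N\<^sup>2\<close>; the row sums \<open>1 / N\<close> force equality.\<close>
  show ?thesis
    unfolding N_def[symmetric]
  proof (rule sum_eq_card_mult_bound_imp_eq[OF fin _ _ xy(2)])
    show "(R x z)\<^sup>2 \<le> 1 / N\<^sup>2" if "z \<in> C" for z
    proof -
      have "(R x z)\<^sup>2 = (\<Sum>w\<in>C. R x w * R w z)\<^sup>2"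
        using idem xy(1) that by simp
      also have "\<dots> \<le> (\<Sum>w\<in>C. (R x w)\<^sup>2) * (\<Sum>w\<in>C. (R w z)\<^sup>2)"
        by (rule Cauchy_Schwarz_ineq_sum)
      also have "(\<Sum>w\<in>C. (R w z)\<^sup>2) = (\<Sum>w\<in>C. (R z w)\<^sup>2)"
        using sym that by (intro sum.cong) auto
      finally show ?thesis
        using row_sq xy(1) that by (simp add: power2_eq_square)
    qed
    show "(\<Sum>z\<in>C. (R x z)\<^sup>2) = real (card C) * (1 / N\<^sup>2)"
      using row_sq[OF xy(1)] N by (simp add: N_def power2_eq_square)
  qed
qed

lemma sign_matrix_mult:
  fixes \<sigma> :: "'a \<Rightarrow> 'a \<Rightarrow> real"
  assumes fin: "finite C"
    and sign: "\<And>x y. x \<in> C \<Longrightarrow> y \<in> C \<Longrightarrow> \<sigma> x y = 1 \<or> \<sigma> x y = -1"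
    and square: "\<And>x y. x \<in> C \<Longrightarrow> y \<in> C \<Longrightarrow> (\<Sum>z\<in>C. \<sigma> x z * \<sigma> z y) = card C * \<sigma> x y"
    and xyz: "x \<in> C" "y \<in> C" "z \<in> C"
  shows "\<sigma> x z * \<sigma> z y = \<sigma> x y"
proof -
  \<comment> \<open>The \<open>card C\<close> terms \<open>\<sigma> x y * \<sigma> x w * \<sigma> w y\<close> are \<open>\<plusminus>1\<close> and add up to \<open>card C\<close>.\<close>
  have "\<sigma> x y * (\<sigma> x z * \<sigma> z y) = 1"
  proof (rule sum_eq_card_mult_bound_imp_eq[OF fin _ _ xyz(3)])
    show "\<sigma> x y * (\<sigma> x w * \<sigma> w y) \<le> 1" if "w \<in> C" for w
      using sign[OF xyz(1,2)] sign[OF xyz(1) that] sign[OF that xyz(2)] by auto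
    show "(\<Sum>w\<in>C. \<sigma> x y * (\<sigma> x w * \<sigma> w y)) = real (card C) * 1"
      using square[OF xyz(1,2)] sign[OF xyz(1,2)] by (auto simp: sum_distrib_left[symmetric])
  qed
  then show ?thesis
    using sign[OF xyz(1,2)] by auto
qed

lemma symmetric_idempotent_const_diag_rank_one:
  fixes R :: "'a \<Rightarrow> 'a \<Rightarrow> real"
  assumes fin: "finite C"
    and sym: "\<And>x y. x \<in> C \<Longrightarrow> y \<in> C \<Longrightarrow> R x y = R y x"
    and idem: "\<And>x y. x \<in> C \<Longrightarrow> y \<in> C \<Longrightarrow> (\<Sum>z\<in>C. R x z * R z y) = R x y"
    and diag: "\<And>x. x \<in> C \<Longrightarrow> R x x = 1 / card C"
  obtains \<epsilon> :: "'a \<Rightarrow> real"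
  where "\<And>x. x \<in> C \<Longrightarrow> \<epsilon> x = 1 \<or> \<epsilon> x = -1"
    and "\<And>x y. x \<in> C \<Longrightarrow> y \<in> C \<Longrightarrow> R x y = \<epsilon> x * \<epsilon> y / card C"
proof (cases "C = {}")
  case False
  then obtain x0 where x0: "x0 \<in> C"
    by blast
  define \<sigma> where "\<sigma> x y = card C * R x y" for x y
  have N: "real (card C) > 0"
    using fin x0 by (auto simp: card_gt_0_iff)
  have sign: "\<sigma> x y = 1 \<or> \<sigma> x y = -1" if "x \<in> C" "y \<in> C" for x y
    using symmetric_idempotent_entry_square[OF fin sym idem diag that] N
    by (simp add: \<sigma>_def power_mult_distrib power2_eq_1_iff[symmetric])
  have square: "(\<Sum>z\<in>C. \<sigma> x z * \<sigma> z y) = card C * \<sigma> x y" if "x \<in> C" "y \<in> C" for x y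
    using idem[OF that] by (simp add: \<sigma>_def sum_distrib_left[symmetric] mult_ac)
  show ?thesis
  proof (rule that[of "\<sigma> x0"])
    show "\<sigma> x0 x = 1 \<or> \<sigma> x0 x = -1" if "x \<in> C" for x
      using sign[OF x0 that] .
    show "R x y = \<sigma> x0 x * \<sigma> x0 y / card C" if "x \<in> C" "y \<in> C" for x y
    proof -
      have "\<sigma> x y = \<sigma> x0 x * \<sigma> x0 y"
        using sign_matrix_mult[OF fin sign square x0 that(2) that(1)] sign[OF x0 that(1)] by auto
      then show ?thesis
        using N by (simp add: \<sigma>_def field_simps)
    qed
  qed
qed (use that in blast)

(* The moment relations of a squared Gram matrix M make this a projection, and its
   trace is 1 exactly when 2 card C = n (n + 1) + 2. *)
definition gram_projection :: "'a set \<Rightarrow> real \<Rightarrow> ('a \<Rightarrow> 'a \<Rightarrow> real) \<Rightarrow> 'a \<Rightarrow> 'a \<Rightarrow> real" where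
  "gram_projection C n M x y = of_bool (x = y) + (n - n * (n + 2) * M x y) / (2 * card C)"

lemma gram_projection_idempotent:
  fixes C :: "'a set" and M :: "'a \<Rightarrow> 'a \<Rightarrow> real" and n :: real
  defines "N \<equiv> real (card C)" and "R \<equiv> gram_projection C n M"
  assumes fin: "finite C" and n: "n > 0"
    and sym: "\<And>x y. x \<in> C \<Longrightarrow> y \<in> C \<Longrightarrow> M x y = M y x"
    and row: "\<And>x. x \<in> C \<Longrightarrow> (\<Sum>z\<in>C. M x z) = N / n"
    and square: "\<And>x y. x \<in> C \<Longrightarrow> y \<in> C \<Longrightarrow>
      (\<Sum>z\<in>C. M x z * M z y) = N / (n * (n + 2)) * (1 + 2 * M x y)"
    and xy: "x \<in> C" "y \<in> C"
  shows "(\<Sum>z\<in>C. R x z * R z y) = R x y"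
proof -
  define k where "k = n * (n + 2)"
  define S where "S x y = (n - k * M x y) / (2 * N)" for x y
  have N: "N > 0"
    using fin xy by (auto simp: N_def card_gt_0_iff)
  have k: "k > 0"
    using n by (simp add: k_def)
  have col: "(\<Sum>z\<in>C. M z y) = N / n"
    using row[OF xy(2)] sym[OF _ xy(2)] by (simp cong: sum.cong)
  have "(\<Sum>z\<in>C. (n - k * M x z) * (n - k * M z y))
      = N * n\<^sup>2 - k * (\<Sum>z\<in>C. M z y) * n - k * (\<Sum>z\<in>C. M x z) * n + k\<^sup>2 * (\<Sum>z\<in>C. M x z * M z y)"
    by (simp add: algebra_simps power2_eq_square sum.distrib sum_subtractf sum_distrib_left N_def)
  also have "\<dots> = - 2 * N * (n - k * M x y)"
    using n k by (simp add: row[OF xy(1)] col square[OF xy] k_def[symmetric])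
      (simp add: k_def field_simps power2_eq_square)
  finally have SS: "(\<Sum>z\<in>C. S x z * S z y) = - S x y"
    using N by (simp add: S_def sum_divide_distrib[symmetric] field_simps power2_eq_square)
  have R_eq: "R u v = of_bool (u = v) + S u v" for u v
    by (simp add: R_def S_def k_def N_def gram_projection_def)
  have "(\<Sum>z\<in>C. R x z * R z y)
      = (\<Sum>z\<in>C. of_bool (x = z) * of_bool (z = y)) + (\<Sum>z\<in>C. of_bool (x = z) * S z y)
        + (\<Sum>z\<in>C. S x z * of_bool (z = y)) + (\<Sum>z\<in>C. S x z * S z y)"
    by (simp add: R_eq algebra_simps sum.distrib)
  also have "\<dots> = R x y"
    using fin xy by (simp add: SS R_eq)
  finally show ?thesis .
qed

lemma squared_gram_sign_structure:
  fixes C :: "'a set" and M :: "'a \<Rightarrow> 'a \<Rightarrow> real" and n :: real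
  defines "N \<equiv> real (card C)"
  assumes fin: "finite C" and n: "n > 0" and size: "2 * N = n * (n + 1) + 2"
    and sym: "\<And>x y. x \<in> C \<Longrightarrow> y \<in> C \<Longrightarrow> M x y = M y x"
    and diag: "\<And>x. x \<in> C \<Longrightarrow> M x x = 1"
    and row: "\<And>x. x \<in> C \<Longrightarrow> (\<Sum>z\<in>C. M x z) = N / n"
    and square: "\<And>x y. x \<in> C \<Longrightarrow> y \<in> C \<Longrightarrow>
      (\<Sum>z\<in>C. M x z * M z y) = N / (n * (n + 2)) * (1 + 2 * M x y)"
  obtains \<epsilon> where "\<And>x. x \<in> C \<Longrightarrow> \<epsilon> x = 1 \<or> \<epsilon> x = -1" and "(\<Sum>x\<in>C. \<epsilon> x) = 0"
    and "\<And>x y. x \<in> C \<Longrightarrow> y \<in> C \<Longrightarrow> n * (n + 2) * M x y = n + 2 * N * of_bool (x = y) - 2 * \<epsilon> x * \<epsilon> y"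
proof -
  define R where "R = gram_projection C n M"
  have N: "N > 0"
    using size n by (smt (verit) mult_pos_pos)
  then have "C \<noteq> {}"
    by (auto simp: N_def)
  then obtain x0 where x0: "x0 \<in> C"
    by blast
  have R_sym: "R x y = R y x" if "x \<in> C" "y \<in> C" for x y
    using sym[OF that] by (simp add: R_def gram_projection_def eq_commute)
  have R_diag: "R x x = 1 / card C" if "x \<in> C" for x
    using diag[OF that] size N by (simp add: R_def gram_projection_def N_def field_simps)
  have R_idem: "(\<Sum>z\<in>C. R x z * R z y) = R x y" if "x \<in> C" "y \<in> C" for x y
    unfolding R_def using fin n sym row[unfolded N_def] square[unfolded N_def] that
    by (rule gram_projection_idempotent)
  obtain \<epsilon> where sign: "\<And>x. x \<in> C \<Longrightarrow> \<epsilon> x = 1 \<or> \<epsilon> x = -1"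
    and R: "\<And>x y. x \<in> C \<Longrightarrow> y \<in> C \<Longrightarrow> R x y = \<epsilon> x * \<epsilon> y / N"
    using symmetric_idempotent_const_diag_rank_one[OF fin R_sym R_idem R_diag] unfolding N_def by blast
  have "(\<Sum>y\<in>C. R x0 y) = 1 + (N * n - n * (n + 2) * (N / n)) / (2 * N)"
    using fin x0 row[OF x0] by (simp add: R_def gram_projection_def sum.distrib sum_subtractf
        sum_divide_distrib[symmetric] sum_distrib_left[symmetric] N_def)
  also have "\<dots> = 0"
    using n N by (simp add: field_simps)
  finally have "\<epsilon> x0 * (\<Sum>y\<in>C. \<epsilon> y) / N = 0"
    using R[OF x0] by (simp add: sum_distrib_left sum_divide_distrib)
  then have "(\<Sum>x\<in>C. \<epsilon> x) = 0"
    using sign[OF x0] N by auto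
  moreover have "n * (n + 2) * M x y = n + 2 * N * of_bool (x = y) - 2 * \<epsilon> x * \<epsilon> y"
    if "x \<in> C" "y \<in> C" for x y
  proof -
    have "2 * N * R x y = 2 * N * of_bool (x = y) + n - n * (n + 2) * M x y"
      using N by (simp add: R_def gram_projection_def N_def field_simps)
    moreover have "2 * N * R x y = 2 * \<epsilon> x * \<epsilon> y"
      using R[OF that] N by simp
    ultimately show ?thesis
      by linarith
  qed
  ultimately show ?thesis
    using that sign by blast
qed

lemma design_sign_structure:
  fixes C :: "(real^'n) set"
  defines "n \<equiv> real CARD('n)" and "N \<equiv> real (card C)"
  assumes design: "spherical_22_design C" and dim: "CARD('n) \<ge> 2" and size: "2 * N = n * (n + 1) + 2"
  obtains \<epsilon> where "\<And>x. x \<in> C \<Longrightarrow> \<epsilon> x = 1 \<or> \<epsilon> x = -1" and "(\<Sum>x\<in>C. \<epsilon> x) = 0"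
    and "\<And>x y. x \<in> C \<Longrightarrow> y \<in> C \<Longrightarrow>
      n * (n + 2) * (x \<bullet> y)\<^sup>2 = n + 2 * N * of_bool (x = y) - 2 * \<epsilon> x * \<epsilon> y"
proof -
  have fin: "finite C"
    using design by (simp add: spherical_22_design_def)
  have n: "n > 0"
    by (simp add: n_def)
  have sym: "(x \<bullet> y)\<^sup>2 = (y \<bullet> x)\<^sup>2" for x y :: "real^'n"
    by (simp add: inner_commute)
  have diag: "(x \<bullet> x)\<^sup>2 = 1" if "x \<in> C" for x
    using design_inner_self[OF design that] by simp
  have row: "(\<Sum>z\<in>C. (x \<bullet> z)\<^sup>2) = N / n" if "x \<in> C" for x
    using design_second_moment[OF design dim, of x x] design_inner_self[OF design that]
    by (simp add: n_def N_def power2_eq_square inner_commute)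
  have square: "(\<Sum>z\<in>C. (x \<bullet> z)\<^sup>2 * (z \<bullet> y)\<^sup>2) = N / (n * (n + 2)) * (1 + 2 * (x \<bullet> y)\<^sup>2)"
    if "x \<in> C" "y \<in> C" for x y
    using design_fourth_moment[OF design dim, of x y] design_inner_self[OF design that(1)]
      design_inner_self[OF design that(2)]
    by (simp add: n_def N_def inner_commute)
  show ?thesis
    using squared_gram_sign_structure[where M = "\<lambda>x y. (x \<bullet> y)\<^sup>2", OF fin n size[unfolded N_def]]
      sym diag row square that
    unfolding N_def by blast
qed

lemma signed_second_moment_vanishes:
  fixes C :: "(real^'n) set" and \<epsilon> :: "real^'n \<Rightarrow> real" and n :: real
  defines "N \<equiv> real (card C)"
  assumes fin: "finite C" and n: "n > 0" and unit: "\<And>x. x \<in> C \<Longrightarrow> x \<bullet> x = 1"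
    and sign: "\<And>x. x \<in> C \<Longrightarrow> \<epsilon> x = 1 \<or> \<epsilon> x = -1" and sum0: "(\<Sum>x\<in>C. \<epsilon> x) = 0"
    and gram: "\<And>x y. x \<in> C \<Longrightarrow> y \<in> C \<Longrightarrow>
      n * (n + 2) * (x \<bullet> y)\<^sup>2 = n + 2 * N * of_bool (x = y) - 2 * \<epsilon> x * \<epsilon> y"
  shows "(\<Sum>x\<in>C. \<epsilon> x * ((x \<bullet> u) * (x \<bullet> v))) = 0"
proof -
  have "n * (n + 2) * (\<Sum>x\<in>C. \<Sum>y\<in>C. \<epsilon> x * \<epsilon> y * (x \<bullet> y)\<^sup>2)
      = (\<Sum>x\<in>C. \<Sum>y\<in>C. \<epsilon> x * \<epsilon> y * (n + 2 * N * of_bool (x = y) - 2 * \<epsilon> x * \<epsilon> y))"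
    using gram by (simp add: sum_distrib_left mult_ac cong: sum.cong)
  also have "\<dots> = (\<Sum>x\<in>C. \<Sum>y\<in>C. n * (\<epsilon> x * \<epsilon> y) + 2 * N * of_bool (x = y) - 2)"
    by (intro sum.cong refl) (auto dest!: sign)
  also have "\<dots> = n * (\<Sum>x\<in>C. \<epsilon> x * (\<Sum>y\<in>C. \<epsilon> y)) + 2 * N * N - 2 * N * N"
    using fin by (simp add: sum.distrib sum_subtractf sum_distrib_left N_def)
  also have "\<dots> = 0"
    using sum0 by simp
  finally have "(\<Sum>x\<in>C. \<Sum>y\<in>C. \<epsilon> x * \<epsilon> y * (x \<bullet> y)\<^sup>2) = 0"
    using n by simp
  moreover have "(\<Sum>x\<in>C. \<epsilon> x * (x \<bullet> x)) = 0"
    using sum0 by (simp add: unit cong: sum.cong)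
  ultimately show ?thesis
    using second_moment_isotropic[of \<epsilon> C u v] by simp
qed

lemma sum_sign_positive_part:
  fixes \<epsilon> f :: "'a \<Rightarrow> real"
  assumes "finite C" and "\<And>x. x \<in> C \<Longrightarrow> \<epsilon> x = 1 \<or> \<epsilon> x = -1"
  shows "(\<Sum>x\<in>{x \<in> C. \<epsilon> x = 1}. f x) = (\<Sum>x\<in>C. (1 + \<epsilon> x) / 2 * f x)"
proof -
  have "(\<Sum>x\<in>{x \<in> C. \<epsilon> x = 1}. f x) = (\<Sum>x\<in>C. if \<epsilon> x = 1 then f x else 0)"
    using assms(1) by (rule sum.inter_filter)
  also have "\<dots> = (\<Sum>x\<in>C. (1 + \<epsilon> x) / 2 * f x)"
    by (intro sum.cong refl) (auto dest: assms(2))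
  finally show ?thesis .
qed

lemma design_positive_part_equiangular_tight_frame:
  fixes C :: "(real^'n) set"
  defines "n \<equiv> real CARD('n)" and "N \<equiv> real (card C)"
  assumes design: "spherical_22_design C" and dim: "CARD('n) \<ge> 2" and size: "2 * N = n * (n + 1) + 2"
  obtains P where "P \<subseteq> C" and "2 * card P = card C"
    and "\<And>x y. x \<in> P \<Longrightarrow> y \<in> P \<Longrightarrow> x \<noteq> y \<Longrightarrow> (x \<bullet> y)\<^sup>2 = (n - 2) / (n * (n + 2))"
    and "\<And>u v. (\<Sum>z\<in>P. (z \<bullet> u) * (z \<bullet> v)) = N / (2 * n) * (u \<bullet> v)"
proof -
  obtain \<epsilon> where sign: "\<And>x. x \<in> C \<Longrightarrow> \<epsilon> x = 1 \<or> \<epsilon> x = -1" and sum0: "(\<Sum>x\<in>C. \<epsilon> x) = 0"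
    and gram: "\<And>x y. x \<in> C \<Longrightarrow> y \<in> C \<Longrightarrow>
      n * (n + 2) * (x \<bullet> y)\<^sup>2 = n + 2 * N * of_bool (x = y) - 2 * \<epsilon> x * \<epsilon> y"
    using design_sign_structure[OF design dim] size unfolding n_def N_def by blast
  have fin: "finite C"
    using design by (simp add: spherical_22_design_def)
  have n: "n > 0"
    by (simp add: n_def)
  have signed_moment: "(\<Sum>x\<in>C. \<epsilon> x * ((x \<bullet> u) * (x \<bullet> v))) = 0" for u v
    by (rule signed_second_moment_vanishes[OF fin n design_inner_self[OF design] sign sum0 gram[unfolded N_def]])
  define P where "P = {x \<in> C. \<epsilon> x = 1}"
  have half: "(\<Sum>x\<in>P. f x) = (\<Sum>x\<in>C. (1 + \<epsilon> x) / 2 * f x)" for f :: "real^'n \<Rightarrow> real"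
    unfolding P_def using fin sign by (rule sum_sign_positive_part)
  show ?thesis
  proof (rule that[of P])
    show "P \<subseteq> C"
      by (auto simp: P_def)
    have "real (card P) = (\<Sum>x\<in>C. (1 + \<epsilon> x) / 2)"
      using half[of "\<lambda>_. 1"] by simp
    then show "2 * card P = card C"
      using sum0 by (simp add: sum.distrib add_divide_distrib sum_divide_distrib[symmetric] flip: of_nat_eq_iff)
    show "(x \<bullet> y)\<^sup>2 = (n - 2) / (n * (n + 2))" if "x \<in> P" "y \<in> P" "x \<noteq> y" for x y
    proof -
      have "n * (n + 2) * (x \<bullet> y)\<^sup>2 = n - 2"
        using gram[of x y] that by (simp add: P_def)
      moreover have "n * (n + 2) \<noteq> 0"
        using n by simp
      ultimately show ?thesis
        by (simp add: eq_divide_eq mult.commute)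
    qed
    show "(\<Sum>z\<in>P. (z \<bullet> u) * (z \<bullet> v)) = N / (2 * n) * (u \<bullet> v)" for u v
    proof -
      have "(\<Sum>z\<in>P. (z \<bullet> u) * (z \<bullet> v))
          = ((\<Sum>z\<in>C. (z \<bullet> u) * (z \<bullet> v)) + (\<Sum>z\<in>C. \<epsilon> z * ((z \<bullet> u) * (z \<bullet> v)))) / 2"
        by (simp add: half sum.distrib ring_distribs add_divide_distrib sum_divide_distrib[symmetric])
      then show ?thesis
        using design_second_moment[OF design dim, of u v] signed_moment[of u v]
        by (simp add: n_def N_def)
    qed
  qed
qed

lemma Ints_if_Rats_root_of_monic_quadratic:
  fixes w :: real
  assumes "w \<in> \<rat>" and "T \<in> \<int>" and "w\<^sup>2 + T * w \<in> \<int>"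
  shows "w \<in> \<int>"
proof -
  obtain a b where ab: "w = of_int a / of_int b" "b > 0" "coprime a b"
    using assms(1) by (rule Rats_cases')
  obtain t where t: "T = of_int t"
    using assms(2) by (rule Ints_cases)
  obtain c where c: "w\<^sup>2 + T * w = of_int c"
    using assms(3) by (rule Ints_cases)
  have "(of_int a)\<^sup>2 + of_int t * of_int a * of_int b = (of_int (c * b\<^sup>2) :: real)"
    using c ab t by (simp add: field_simps power2_eq_square)
  then have "a\<^sup>2 = b * (c * b - t * a)"
    by (simp add: algebra_simps power2_eq_square flip: of_int_mult of_int_add of_int_eq_iff)
  then have "b dvd a\<^sup>2"
    by simp
  moreover have "coprime (a\<^sup>2) b"
    using ab(3) by simp
  ultimately have "is_unit b"
    using coprime_common_divisor[of "a\<^sup>2" b b] by simp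
  then show ?thesis
    using ab by simp
qed

lemma equiangular_tight_frame_constant:
  fixes P :: "'a::real_inner set" and \<beta> c :: real
  assumes fin: "finite P"
    and unit: "\<And>x. x \<in> P \<Longrightarrow> x \<bullet> x = 1"
    and equi: "\<And>x y. x \<in> P \<Longrightarrow> y \<in> P \<Longrightarrow> x \<noteq> y \<Longrightarrow> (x \<bullet> y)\<^sup>2 = \<beta>"
    and frame: "\<And>x y. x \<in> P \<Longrightarrow> y \<in> P \<Longrightarrow> (\<Sum>z\<in>P. (z \<bullet> x) * (z \<bullet> y)) = c * (x \<bullet> y)"
    and x: "x \<in> P"
  shows "c = 1 + (real (card P) - 1) * \<beta>"
proof -
  have "c = (\<Sum>z\<in>P. (z \<bullet> x)\<^sup>2)"
    using frame[OF x x] unit[OF x] by (simp add: power2_eq_square)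
  also have "\<dots> = (x \<bullet> x)\<^sup>2 + (\<Sum>z\<in>P - {x}. (z \<bullet> x)\<^sup>2)"
    using fin x by (simp add: sum.remove)
  also have "\<dots> = 1 + (real (card P) - 1) * \<beta>"
  proof -
    have "card P \<ge> 1"
      using fin x by (auto simp: Suc_le_eq card_gt_0_iff)
    then show ?thesis
      using fin x unit[OF x] equi[OF _ x] by (simp add: of_nat_diff)
  qed
  finally show ?thesis .
qed

lemma equiangular_tight_frame_cross_term:
  fixes P :: "'a::real_inner set" and \<beta> c :: real
  assumes fin: "finite P"
    and unit: "\<And>x. x \<in> P \<Longrightarrow> x \<bullet> x = 1"
    and equi: "\<And>x y. x \<in> P \<Longrightarrow> y \<in> P \<Longrightarrow> x \<noteq> y \<Longrightarrow> (x \<bullet> y)\<^sup>2 = \<beta>"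
    and frame: "\<And>x y. x \<in> P \<Longrightarrow> y \<in> P \<Longrightarrow> (\<Sum>z\<in>P. (z \<bullet> x) * (z \<bullet> y)) = c * (x \<bullet> y)"
    and "\<beta> \<noteq> 0" and xy: "x \<in> P" "y \<in> P" "x \<noteq> y"
  obtains T where "T \<in> \<int>" and "\<beta> * T = (c - 2) * (x \<bullet> y)"
proof
  \<comment> \<open>Away from \<open>x\<close> and \<open>y\<close>, each term of the frame identity for \<open>(x, y)\<close> is \<open>\<plusminus>\<beta>\<close>.\<close>
  define Q where "Q = P - {x, y}"
  define T where "T = (\<Sum>z\<in>Q. (z \<bullet> x) * (z \<bullet> y) / \<beta>)"
  show "T \<in> \<int>"
    unfolding T_def
  proof (rule Ints_sum)
    fix z assume "z \<in> Q"
    then have "((z \<bullet> x) * (z \<bullet> y) / \<beta>)\<^sup>2 = 1"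
      using equi[of z x] equi[of z y] xy \<open>\<beta> \<noteq> 0\<close> by (auto simp: Q_def power_mult_distrib power_divide)
    then show "(z \<bullet> x) * (z \<bullet> y) / \<beta> \<in> \<int>"
      by (auto simp: power2_eq_1_iff)
  qed
  have "c * (x \<bullet> y) = (\<Sum>z\<in>P. (z \<bullet> x) * (z \<bullet> y))"
    using frame[OF xy(1,2)] by simp
  also have "\<dots> = (\<Sum>z\<in>Q. (z \<bullet> x) * (z \<bullet> y)) + (\<Sum>z\<in>{x, y}. (z \<bullet> x) * (z \<bullet> y))"
    unfolding Q_def using fin xy by (intro sum.subset_diff) auto
  also have "\<dots> = \<beta> * T + 2 * (x \<bullet> y)"
    using xy unit \<open>\<beta> \<noteq> 0\<close> by (simp add: T_def sum_divide_distrib[symmetric] inner_commute)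
  finally show "\<beta> * T = (c - 2) * (x \<bullet> y)"
    by (simp add: algebra_simps)
qed

lemma equiangular_tight_frame_inverse_angle_square:
  fixes P :: "'a::real_inner set" and \<beta> c :: real
  assumes fin: "finite P" and two: "card P \<ge> 2"
    and unit: "\<And>x. x \<in> P \<Longrightarrow> x \<bullet> x = 1"
    and equi: "\<And>x y. x \<in> P \<Longrightarrow> y \<in> P \<Longrightarrow> x \<noteq> y \<Longrightarrow> (x \<bullet> y)\<^sup>2 = \<beta>"
    and frame: "\<And>x y. x \<in> P \<Longrightarrow> y \<in> P \<Longrightarrow> (\<Sum>z\<in>P. (z \<bullet> x) * (z \<bullet> y)) = c * (x \<bullet> y)"
    and \<beta>: "\<beta> \<in> \<rat>" "\<beta> \<noteq> 0" "(real (card P) - 1) * \<beta> \<noteq> 1"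
  obtains k :: int where "of_int k ^ 2 * \<beta> = 1"
proof -
  obtain x y where xy: "x \<in> P" "y \<in> P" "x \<noteq> y"
    using two card_le_Suc0_iff_eq[OF fin] by (metis not_less_eq_eq numeral_2_eq_2)
  define a where "a = x \<bullet> y"
  have a: "a\<^sup>2 = \<beta>"
    using equi[OF xy] by (simp add: a_def)
  then have "a \<noteq> 0"
    using \<beta>(2) by auto
  have c: "c = 1 + (real (card P) - 1) * \<beta>"
    using fin unit equi frame xy(1) by (rule equiangular_tight_frame_constant)
  obtain T where "T \<in> \<int>" and "\<beta> * T = (c - 2) * a"
    using equiangular_tight_frame_cross_term[OF fin unit equi frame \<beta>(2) xy] unfolding a_def .
  \<comment> \<open>\<open>w = 1 / (x \<bullet> y)\<close> is a rational root of the monic integer polynomial \<open>X\<^sup>2 + T X - (card P - 1)\<close>.\<close>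
  define w where "w = 1 / a"
  have w2: "w\<^sup>2 * \<beta> = 1"
    using a \<beta>(2) by (simp add: w_def power_divide)
  have "a * (T * a) = a * (c - 2)"
    using \<open>\<beta> * T = (c - 2) * a\<close> a by (simp add: power2_eq_square algebra_simps)
  then have "T * a = c - 2"
    using \<open>a \<noteq> 0\<close> by simp
  then have T: "T = (c - 2) * w"
    using \<open>a \<noteq> 0\<close> by (simp add: w_def field_simps)
  have "w\<^sup>2 + T * w = (c - 1) * w\<^sup>2"
    unfolding T by (simp add: power2_eq_square algebra_simps)
  also have "\<dots> = (real (card P) - 1) * (w\<^sup>2 * \<beta>)"
    unfolding c by (simp add: algebra_simps)
  also have "\<dots> = of_nat (card P) - 1"
    using w2 by simp
  finally have root: "w\<^sup>2 + T * w = of_nat (card P) - 1" .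
  have "c - 2 \<noteq> 0" and "c - 2 \<in> \<rat>"
    using c \<beta> by auto
  moreover have "T \<in> \<rat>"
    using \<open>T \<in> \<int>\<close> Ints_subset_Rats by blast
  ultimately have "w \<in> \<rat>"
    using T by (metis Rats_divide nonzero_mult_div_cancel_left)
  then have "w \<in> \<int>"
    by (rule Ints_if_Rats_root_of_monic_quadratic[OF _ \<open>T \<in> \<int>\<close>]) (simp add: root)
  then obtain k where "w = of_int k"
    by (rule Ints_cases)
  then show ?thesis
    using w2 that by simp
qed

lemma nat_square_add_two_ne_seven_mult: "(m::nat) * m + 2 \<noteq> 7 * m"
proof
  assume eq: "m * m + 2 = 7 * m"
  have "m < 7"
  proof (rule ccontr)
    assume "\<not> m < 7"
    then have "7 * m \<le> m * m"
      by simp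
    then show False
      using eq by linarith
  qed
  then show False
    using eq by (simp add: less_Suc_eq numeral_eq_Suc) (elim disjE; simp)
qed

lemma int_square_strictly_between_consecutive_squares:
  fixes j k :: int
  assumes "0 \<le> j" and "j\<^sup>2 < k\<^sup>2" and "k\<^sup>2 < (j + 1)\<^sup>2"
  shows False
proof -
  have "j < \<bar>k\<bar>"
    by (rule power_less_imp_less_base[of _ 2]) (use assms in simp_all)
  moreover have "\<bar>k\<bar> < j + 1"
    by (rule power_less_imp_less_base[of _ 2]) (use assms in simp_all)
  ultimately show False
    by linarith
qed

lemma int_square_mult_sub_two_ne:
  fixes k n :: int
  assumes "n \<ge> 3"
  shows "k\<^sup>2 * (n - 2) \<noteq> n * (n + 2)"
proof
  assume eq: "k\<^sup>2 * (n - 2) = n * (n + 2)"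
  show False
  proof (cases "n \<le> 10")
    case True
    \<comment> \<open>\<open>k\<^sup>2 = n (n + 2) / (n - 2)\<close> lies strictly between 9 and 16 here\<close>
    then have "n = 3 \<or> n = 4 \<or> n = 5 \<or> n = 6 \<or> n = 7 \<or> n = 8 \<or> n = 9 \<or> n = 10"
      using assms by arith
    then have "3\<^sup>2 < k\<^sup>2 \<and> k\<^sup>2 < (3 + 1)\<^sup>2"
      using eq by auto
    then show False
      using int_square_strictly_between_consecutive_squares[of 3 k] by simp
  next
    case False
    then have "(n + 4) * (n - 2) < k\<^sup>2 * (n - 2)" and "k\<^sup>2 * (n - 2) < (n + 5) * (n - 2)"
      using eq by (simp_all add: algebra_simps)
    then have "n + 4 < k\<^sup>2" and "k\<^sup>2 < n + 5"
      using assms by (simp_all add: mult_less_cancel_right)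
    then show False
      by simp
  qed
qed

lemma inverse_angle_not_int_square:
  fixes n :: nat and k :: int
  assumes "n \<ge> 3"
  shows "of_int k ^ 2 * ((real n - 2) / (real n * (real n + 2))) \<noteq> 1"
proof
  assume "of_int k ^ 2 * ((real n - 2) / (real n * (real n + 2))) = 1"
  then have "real_of_int (k\<^sup>2 * (int n - 2)) = real_of_int (int n * (int n + 2))"
    using assms by (simp add: field_simps)
  then have "k\<^sup>2 * (int n - 2) = int n * (int n + 2)"
    by (simp only: of_int_eq_iff)
  with assms show False
    using int_square_mult_sub_two_ne[of "int n" k] by simp
qed

lemma card_pred_mult_angle_ne_one:
  fixes n m :: nat
  assumes "n \<ge> 3" and "4 * real m = real n * (real n + 1) + 2"
  shows "(real m - 1) * ((real n - 2) / (real n * (real n + 2))) \<noteq> 1"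
proof
  assume "(real m - 1) * ((real n - 2) / (real n * (real n + 2))) = 1"
  then have "4 * ((real m - 1) * (real n - 2)) = (real n + 2) * (4 * real n)"
    using assms(1) by (simp add: field_simps)
  moreover have "(real n + 2) * (real n - 1) = 4 * (real m - 1)"
    using assms(2) by (simp add: algebra_simps)
  ultimately have "(real n + 2) * ((real n - 1) * (real n - 2)) = (real n + 2) * (4 * real n)"
    by (metis mult.assoc)
  then have "(real n - 1) * (real n - 2) = 4 * real n"
    by simp
  then have "real (n * n + 2) = real (7 * n)"
    by (simp add: algebra_simps)
  then show False
    using nat_square_add_two_ne_seven_mult[of n] by (simp only: of_nat_eq_iff)
qed

lemma no_equiangular_tight_frame:
  fixes P :: "'a::real_inner set" and n :: nat and c :: real
  assumes n: "n \<ge> 3" and fin: "finite P" and size: "4 * real (card P) = real n * (real n + 1) + 2"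
    and unit: "\<And>x. x \<in> P \<Longrightarrow> x \<bullet> x = 1"
    and equi: "\<And>x y. x \<in> P \<Longrightarrow> y \<in> P \<Longrightarrow> x \<noteq> y \<Longrightarrow> (x \<bullet> y)\<^sup>2 = (real n - 2) / (real n * (real n + 2))"
    and frame: "\<And>x y. x \<in> P \<Longrightarrow> y \<in> P \<Longrightarrow> (\<Sum>z\<in>P. (z \<bullet> x) * (z \<bullet> y)) = c * (x \<bullet> y)"
  shows False
proof -
  obtain k :: int where "of_int k ^ 2 * ((real n - 2) / (real n * (real n + 2))) = 1"
  proof (rule equiangular_tight_frame_inverse_angle_square[OF fin _ unit equi frame])
    have "3 * 4 \<le> real n * (real n + 1)"
      using n by (intro mult_mono) auto
    then show "card P \<ge> 2"
      using size by linarith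
    show "(real n - 2) / (real n * (real n + 2)) \<in> \<rat>" and "(real n - 2) / (real n * (real n + 2)) \<noteq> 0"
      using n by auto
    show "(real (card P) - 1) * ((real n - 2) / (real n * (real n + 2))) \<noteq> 1"
      using card_pred_mult_angle_ne_one[OF n size] .
  qed
  then show False
    using inverse_angle_not_int_square[OF n, of k] by blast
qed

theorem mainTheorem6:
  assumes "CARD('n::finite) \<ge> 3"
  shows "\<not> (\<exists>C :: (real ^ 'n) set.
            spherical_22_design C \<and> card C = (CARD('n) + 1 choose 2) + 1)"
proof
  assume "\<exists>C :: (real ^ 'n) set. spherical_22_design C \<and> card C = (CARD('n) + 1 choose 2) + 1"
  then obtain C :: "(real ^ 'n) set"
    where design: "spherical_22_design C" and card: "card C = (CARD('n) + 1 choose 2) + 1"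
    by blast
  define n where "n = real CARD('n)"
  have dim: "CARD('n) \<ge> 2"
    using assms by simp
  have "2 * (CARD('n) + 1 choose 2) = CARD('n) * (CARD('n) + 1)"
    by (simp add: choose_two dvd_div_mult_self mult.commute)
  then have size: "2 * real (card C) = n * (n + 1) + 2"
    unfolding card n_def by (simp flip: of_nat_mult add: algebra_simps)
  obtain P where "P \<subseteq> C" and card_P: "2 * card P = card C"
    and equi: "\<And>x y. x \<in> P \<Longrightarrow> y \<in> P \<Longrightarrow> x \<noteq> y \<Longrightarrow> (x \<bullet> y)\<^sup>2 = (n - 2) / (n * (n + 2))"
    and frame: "\<And>u v. (\<Sum>z\<in>P. (z \<bullet> u) * (z \<bullet> v)) = real (card C) / (2 * n) * (u \<bullet> v)"
    using design_positive_part_equiangular_tight_frame[OF design dim size[unfolded n_def]]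
    unfolding n_def by blast
  show False
  proof (rule no_equiangular_tight_frame[OF assms _ _ _ equi[unfolded n_def] frame])
    show "finite P"
      using design \<open>P \<subseteq> C\<close> by (auto simp: spherical_22_design_def intro: finite_subset)
    show "4 * real (card P) = real CARD('n) * (real CARD('n) + 1) + 2"
      using size card_P unfolding n_def by (simp flip: of_nat_mult)
    show "x \<bullet> x = 1" if "x \<in> P" for x
      using design_inner_self[OF design] \<open>P \<subseteq> C\<close> that by blast
  qed
qed

end
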